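(* Let $\mathcal{G}_{k-1}=(V,E_{k-1})$ be an unweighted simple directed graph, let $e_k=(u_k,v_k)$ with $u_k\neq v_k$ and $e_k\notin E_{k-1}$ be an edge to be inserted, and let $\mathcal{G}_k=(V,E_{k-1}\cup\{e_k\})$. Let $L_{k-1}$ be a list of $l_{k-1}$ spanning converging forests sampled uniformly from $\mathcal{F}(\mathcal{G}_{k-1})$. Let $L_k$ be the list obtained from $L_{k-1}$ by keeping all forests of $L_{k-1}$ and, in addition, for each $\phi\in L_{k-1}$ with $r_\phi(u_k)=u_k$ and $r_\phi(v_k)\neq u_k$, adding the forest $\phi\cup\{e_k\}$. Then all forests in $\mathcal{F}(\mathcal{G}_k)$ have the same probability of being included in $L_k$; that is, $\mathbb{P}(\phi_1\in L_k)=\mathbb{P}(\phi_2\in L_k)$ for all $\phi_1,\phi_2\in\mathcal{F}(\mathcal{G}_k)$.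
   Context: A rooted converging tree is a weakly connected digraph without cycles in which one node (the root) has out-degree $0$ and every other node has out-degree $1$ (an isolated node is such a tree rooted at itself). A spanning converging forest of a digraph $\mathcal{G}=(V,E)$ is a spanning subgraph (containing all of $V$ and a subset of $E$, identified with its edge set) whose weakly connected components are rooted converging trees. $\mathcal{F}(\mathcal{G})$ denotes the set of all spanning converging forests of $\mathcal{G}$; $r_\phi(i)$ is the root of the tree of $\phi$ containing $i$. "Sampled uniformly" means each forest of $\mathcal{F}(\mathcal{G}_{k-1})$ is equally likely to appear in $L_{k-1}$ (e.g. the entries are independent uniform samples from $\mathcal{F}(\mathcal{G}_{k-1})$). The list $L_k$ is the output of the paper's Insert-Update procedure. *)

theory Defs
  imports "HOL-Probability.Probability"
begin

definition simple_digraph :: "'a set \<Rightarrow> ('a \<times> 'a) set \<Rightarrow> bool" where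
  "simple_digraph V E \<longleftrightarrow> finite V \<and> E \<subseteq> V \<times> V \<and> (\<forall>v. (v, v) \<notin> E)"

definition out_nbrs :: "('a \<times> 'a) set \<Rightarrow> 'a \<Rightarrow> 'a set" where
  "out_nbrs F v = {w. (v, w) \<in> F}"

definition weak_comp :: "'a set \<Rightarrow> ('a \<times> 'a) set \<Rightarrow> 'a \<Rightarrow> 'a set" where
  "weak_comp V F i = {j \<in> V. (i, j) \<in> (F \<union> F\<inverse>)\<^sup>*}"

definition rooted_converging_tree :: "'a set \<Rightarrow> ('a \<times> 'a) set \<Rightarrow> bool" where
  "rooted_converging_tree C T \<longleftrightarrow>
     T \<subseteq> C \<times> C \<and>
     (\<forall>i\<in>C. \<forall>j\<in>C. (i, j) \<in> (T \<union> T\<inverse>)\<^sup>*) \<and>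
     acyclic T \<and>
     (\<exists>r\<in>C. out_nbrs T r = {} \<and>
        (\<forall>v\<in>C - {r}. card (out_nbrs T v) = 1))"

definition spanning_converging_forests :: "'a set \<Rightarrow> ('a \<times> 'a) set \<Rightarrow> ('a \<times> 'a) set set" where
  "spanning_converging_forests V E =
     {\<phi>. \<phi> \<subseteq> E \<and>
        (\<forall>i\<in>V. rooted_converging_tree (weak_comp V \<phi> i)
                   (\<phi> \<inter> (weak_comp V \<phi> i \<times> weak_comp V \<phi> i)))}"

definition forest_root :: "'a set \<Rightarrow> ('a \<times> 'a) set \<Rightarrow> 'a \<Rightarrow> 'a" where
  "forest_root V \<phi> i = (THE r. r \<in> weak_comp V \<phi> i \<and> out_nbrs \<phi> r = {})"

definition insert_update :: "'a set \<Rightarrow> 'a \<times> 'a \<Rightarrow> ('a \<times> 'a) set list \<Rightarrow> ('a \<times> 'a) set list" where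
  "insert_update V e L =
     L @ map (\<lambda>\<phi>. insert e \<phi>)
       (filter (\<lambda>\<phi>. forest_root V \<phi> (fst e) = fst e \<and> forest_root V \<phi> (snd e) \<noteq> fst e) L)"

end

theory Submission
  imports Defs
begin

text \<open>Within a finite vertex set, the spanning converging forests are exactly the single-valued
  acyclic edge sets: every node follows its unique out-edge until it reaches the sink of its
  tree. For a forest \<phi> of the new graph one has \<phi> \<in> L_k iff \<phi> - {e_k} \<in> L_(k-1). If e_k \<notin> \<phi>,
  then \<phi> is none of the added forests, which all contain e_k. If e_k = (u, v) \<in> \<phi>, then \<phi> can
  only come from \<psi> = \<phi> - {e_k}, and \<psi> passes the test of Insert-Update: u has no out-edge in \<psi>
  since \<phi> is single-valued, and the root of v in \<psi> is not u since otherwise \<phi> would contain a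
  cycle through e_k. Hence P(\<phi> \<in> L_k) = P(\<phi> - {e_k} \<in> L_(k-1)), which does not depend on \<phi>.\<close>

lemma rtrancl_Restr_of_closed:
  assumes "r `` C \<subseteq> C" "x \<in> C" "(x, y) \<in> r\<^sup>*"
  shows "(x, y) \<in> (Restr r C)\<^sup>*"
proof -
  from assms(3) have "(x, y) \<in> (Restr r C)\<^sup>* \<and> y \<in> C"
  proof (induction rule: rtrancl_induct)
    case base
    show ?case using assms(2) by simp
  next
    case (step y z)
    then have "z \<in> C" using assms(1) by blast
    with step show ?case by (blast intro: rtrancl_into_rtrancl)
  qed
  then show ?thesis ..
qed

lemma trancl_Restr_of_closed:
  assumes "r `` C \<subseteq> C" "x \<in> C" "(x, y) \<in> r\<^sup>+"
  shows "(x, y) \<in> (Restr r C)\<^sup>+"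
proof -
  obtain z where xz: "(x, z) \<in> r" and zy: "(z, y) \<in> r\<^sup>*"
    using assms(3) by (blast dest: tranclD)
  have "z \<in> C" using assms(1,2) xz by blast
  then have "(x, z) \<in> Restr r C" using assms(2) xz by blast
  moreover from assms(1) \<open>z \<in> C\<close> zy have "(z, y) \<in> (Restr r C)\<^sup>*"
    by (rule rtrancl_Restr_of_closed)
  ultimately show ?thesis by (rule rtrancl_into_trancl2)
qed

lemma weak_comp_self: "i \<in> V \<Longrightarrow> i \<in> weak_comp V \<phi> i"
  by (simp add: weak_comp_def)

lemma weak_comp_closed:
  assumes "\<phi> \<subseteq> V \<times> V"
  shows "(\<phi> \<union> \<phi>\<inverse>) `` weak_comp V \<phi> i \<subseteq> weak_comp V \<phi> i"
  using assms by (auto simp: weak_comp_def intro: rtrancl_into_rtrancl)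

lemma weak_comp_connected:
  assumes "j \<in> weak_comp V \<phi> i" "k \<in> weak_comp V \<phi> i"
  shows "(j, k) \<in> (\<phi> \<union> \<phi>\<inverse>)\<^sup>*"
proof -
  have "(i, j) \<in> (\<phi> \<union> \<phi>\<inverse>)\<^sup>*" "(i, k) \<in> (\<phi> \<union> \<phi>\<inverse>)\<^sup>*"
    using assms by (simp_all add: weak_comp_def)
  then show ?thesis by (meson rtrancl_trans symD[OF sym_rtrancl[OF sym_Un_converse]])
qed

lemma rtrancl_in_weak_comp:
  assumes "\<phi> \<subseteq> V \<times> V" "i \<in> V" "(i, r) \<in> \<phi>\<^sup>*"
  shows "r \<in> weak_comp V \<phi> i"
proof -
  have "r \<in> V" using assms(3,1,2) by (induction rule: rtrancl_induct) auto
  moreover have "(i, r) \<in> (\<phi> \<union> \<phi>\<inverse>)\<^sup>*" using rtrancl_mono[of \<phi> "\<phi> \<union> \<phi>\<inverse>"] assms(3) by blast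
  ultimately show ?thesis by (simp add: weak_comp_def)
qed

lemma rtrancl_from_sink:
  "(r, y) \<in> \<phi>\<^sup>* \<Longrightarrow> out_nbrs \<phi> r = {} \<Longrightarrow> y = r"
  by (auto elim: converse_rtranclE simp: out_nbrs_def)

lemma reachable_sink_exists:
  assumes "finite \<phi>" "acyclic \<phi>"
  shows "\<exists>r. (x, r) \<in> \<phi>\<^sup>* \<and> out_nbrs \<phi> r = {}"
proof -
  have "wf (\<phi>\<inverse>)" using assms by (rule finite_acyclic_wf_converse)
  then show ?thesis
  proof (induction x rule: wf_induct_rule)
    case (less x)
    show ?case
    proof (cases "out_nbrs \<phi> x = {}")
      case False
      then obtain y where "(x, y) \<in> \<phi>" by (auto simp: out_nbrs_def)
      with less show ?thesis by (blast intro: converse_rtrancl_into_rtrancl)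
    qed blast
  qed
qed

lemma reachable_sink_unique:
  assumes "single_valued \<phi>" "(x, r\<^sub>1) \<in> \<phi>\<^sup>*" "(x, r\<^sub>2) \<in> \<phi>\<^sup>*"
    "out_nbrs \<phi> r\<^sub>1 = {}" "out_nbrs \<phi> r\<^sub>2 = {}"
  shows "r\<^sub>1 = r\<^sub>2"
  using single_valued_confluent[OF assms(1-3)] rtrancl_from_sink assms(4,5) by metis

lemma weakly_connected_sinks_eq:
  assumes "finite \<phi>" "acyclic \<phi>" "single_valued \<phi>"
    and "(a, b) \<in> (\<phi> \<union> \<phi>\<inverse>)\<^sup>*" "out_nbrs \<phi> a = {}" "out_nbrs \<phi> b = {}"
  shows "a = b"
proof -
  have "r = a" if "(a, y) \<in> (\<phi> \<union> \<phi>\<inverse>)\<^sup>*" "(y, r) \<in> \<phi>\<^sup>*" "out_nbrs \<phi> r = {}" for y r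
    using that
  proof (induction y arbitrary: r rule: rtrancl_induct)
    case base
    then show ?case using assms(5) by (blast dest: rtrancl_from_sink)
  next
    case (step y z)
    obtain s where s: "(y, s) \<in> \<phi>\<^sup>*" "out_nbrs \<phi> s = {}"
      using reachable_sink_exists[OF assms(1,2)] by blast
    have "(y, r) \<in> \<phi>\<^sup>* \<or> (z, s) \<in> \<phi>\<^sup>*"
      using step.hyps(2) step.prems(1) s(1) by (blast intro: converse_rtrancl_into_rtrancl)
    then have "r = s"
      using reachable_sink_unique[OF assms(3)] s step.prems by metis
    with step.IH[OF s] show ?case by simp
  qed
  from this[OF assms(4) rtrancl_refl assms(6)] show ?thesis by simp
qed

lemma rooted_converging_tree_weak_comp:
  assumes "finite \<phi>" "\<phi> \<subseteq> V \<times> V" "single_valued \<phi>" "acyclic \<phi>" "i \<in> V"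
  shows "rooted_converging_tree (weak_comp V \<phi> i) (Restr \<phi> (weak_comp V \<phi> i))"
proof -
  define C where "C = weak_comp V \<phi> i"
  define T where "T = Restr \<phi> C"
  have closed: "(\<phi> \<union> \<phi>\<inverse>) `` C \<subseteq> C"
    unfolding C_def using assms(2) by (rule weak_comp_closed)
  have "(j, k) \<in> (T \<union> T\<inverse>)\<^sup>*" if "j \<in> C" "k \<in> C" for j k
  proof -
    have "Restr (\<phi> \<union> \<phi>\<inverse>) C = T \<union> T\<inverse>" unfolding T_def by blast
    moreover have "(j, k) \<in> (\<phi> \<union> \<phi>\<inverse>)\<^sup>*"
      using weak_comp_connected that by (simp add: C_def)
    ultimately show ?thesis using rtrancl_Restr_of_closed[OF closed that(1)] by simp
  qed
  then have connected: "\<forall>j\<in>C. \<forall>k\<in>C. (j, k) \<in> (T \<union> T\<inverse>)\<^sup>*" by blast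
  obtain r where r: "(i, r) \<in> \<phi>\<^sup>*" "out_nbrs \<phi> r = {}"
    using reachable_sink_exists[OF assms(1,4)] by blast
  have "r \<in> C" unfolding C_def using assms(2,5) r(1) by (rule rtrancl_in_weak_comp)
  have out_deg_one: "card (out_nbrs T w) = 1" if w: "w \<in> C - {r}" for w
  proof -
    have "out_nbrs \<phi> w \<noteq> {}"
    proof
      assume "out_nbrs \<phi> w = {}"
      moreover have "(r, w) \<in> (\<phi> \<union> \<phi>\<inverse>)\<^sup>*"
        using weak_comp_connected[of r V \<phi> i w] \<open>r \<in> C\<close> w unfolding C_def by blast
      ultimately show False
        using weakly_connected_sinks_eq[OF assms(1,4,3)] r(2) w by blast
    qed
    then obtain a where a: "(w, a) \<in> \<phi>" by (auto simp: out_nbrs_def)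
    then have "a \<in> C" using closed w by blast
    then have "out_nbrs T w = {a}"
      using a w assms(3) by (auto simp: T_def out_nbrs_def single_valued_def)
    then show ?thesis by simp
  qed
  have "out_nbrs T r = {}" using r(2) by (auto simp: T_def out_nbrs_def)
  moreover have "acyclic T" unfolding T_def using assms(4) by (rule acyclic_subset) blast
  moreover have "T \<subseteq> C \<times> C" unfolding T_def by blast
  ultimately have "rooted_converging_tree C T"
    unfolding rooted_converging_tree_def using connected \<open>r \<in> C\<close> out_deg_one by blast
  then show ?thesis by (simp add: C_def T_def)
qed

lemma spanning_converging_forests_iff:
  assumes "finite V" "E \<subseteq> V \<times> V"
  shows "\<phi> \<in> spanning_converging_forests V E \<longleftrightarrow> \<phi> \<subseteq> E \<and> single_valued \<phi> \<and> acyclic \<phi>"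
proof (intro iffI conjI)
  assume \<phi>: "\<phi> \<in> spanning_converging_forests V E"
  show "\<phi> \<subseteq> E" using \<phi> by (simp add: spanning_converging_forests_def)
  then have sub: "\<phi> \<subseteq> V \<times> V" using assms(2) by blast
  have tree: "rooted_converging_tree (weak_comp V \<phi> x) (Restr \<phi> (weak_comp V \<phi> x))"
    and closed: "\<phi> `` weak_comp V \<phi> x \<subseteq> weak_comp V \<phi> x"
    and self: "x \<in> weak_comp V \<phi> x" if "(x, y) \<in> \<phi>" for x y
    using that \<phi> sub weak_comp_closed[OF sub, of x] weak_comp_self[of x V \<phi>]
    by (auto simp: spanning_converging_forests_def)
  show "single_valued \<phi>"
  proof (rule single_valuedI)
    fix x y z assume xy: "(x, y) \<in> \<phi>" and xz: "(x, z) \<in> \<phi>"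
    let ?C = "weak_comp V \<phi> x"
    obtain r where r: "out_nbrs (Restr \<phi> ?C) r = {}"
      "\<forall>w\<in>?C - {r}. card (out_nbrs (Restr \<phi> ?C) w) = 1"
      using tree[OF xy] unfolding rooted_converging_tree_def by blast
    have "y \<in> out_nbrs (Restr \<phi> ?C) x" "z \<in> out_nbrs (Restr \<phi> ?C) x"
      using xy xz closed[OF xy] self[OF xy] by (auto simp: out_nbrs_def)
    moreover from this have "card (out_nbrs (Restr \<phi> ?C) x) = 1"
      using r self[OF xy] by blast
    ultimately show "y = z" by (metis card_1_singletonE singletonD)
  qed
  show "acyclic \<phi>"
  proof (rule acyclicI, intro allI notI)
    fix x assume cycle: "(x, x) \<in> \<phi>\<^sup>+"
    then obtain y where xy: "(x, y) \<in> \<phi>" by (blast dest: tranclD)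
    from trancl_Restr_of_closed[OF closed[OF xy] self[OF xy] cycle]
    have "(x, x) \<in> (Restr \<phi> (weak_comp V \<phi> x))\<^sup>+" .
    with tree[OF xy] show False by (auto simp: rooted_converging_tree_def acyclic_def)
  qed
next
  assume "\<phi> \<subseteq> E \<and> single_valued \<phi> \<and> acyclic \<phi>"
  moreover from this have "\<phi> \<subseteq> V \<times> V" "finite \<phi>"
    using assms finite_subset[of \<phi> "V \<times> V"] by auto
  ultimately show "\<phi> \<in> spanning_converging_forests V E"
    using rooted_converging_tree_weak_comp by (auto simp: spanning_converging_forests_def)
qed

lemma spanning_converging_forest_Diff_edge:
  assumes "finite V" "insert e E \<subseteq> V \<times> V" "\<phi> \<in> spanning_converging_forests V (insert e E)"
  shows "\<phi> - {e} \<in> spanning_converging_forests V E"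
proof -
  have "\<phi> \<subseteq> insert e E" "single_valued \<phi>" "acyclic \<phi>"
    using assms(3) spanning_converging_forests_iff[OF assms(1,2)] by auto
  moreover have "E \<subseteq> V \<times> V" using assms(2) by blast
  ultimately show ?thesis
    using spanning_converging_forests_iff[OF assms(1)] single_valued_subset[of "\<phi> - {e}" \<phi>]
      acyclic_subset[of \<phi> "\<phi> - {e}"]
    by blast
qed

lemma forest_root_eqI:
  assumes "finite \<phi>" "\<phi> \<subseteq> V \<times> V" "single_valued \<phi>" "acyclic \<phi>" "i \<in> V"
    and "(i, r) \<in> \<phi>\<^sup>*" "out_nbrs \<phi> r = {}"
  shows "forest_root V \<phi> i = r"
  unfolding forest_root_def
proof (rule the_equality)
  have "r \<in> weak_comp V \<phi> i" using assms(2,5,6) by (rule rtrancl_in_weak_comp)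
  with assms(7) show "r \<in> weak_comp V \<phi> i \<and> out_nbrs \<phi> r = {}" by blast
  fix s assume s: "s \<in> weak_comp V \<phi> i \<and> out_nbrs \<phi> s = {}"
  with \<open>r \<in> weak_comp V \<phi> i\<close> have "(r, s) \<in> (\<phi> \<union> \<phi>\<inverse>)\<^sup>*"
    by (blast intro: weak_comp_connected)
  with weakly_connected_sinks_eq[OF assms(1,4,3)] assms(7) s show "s = r" by blast
qed

lemma forest_roots_Diff_edge:
  assumes "finite V" "E \<subseteq> V \<times> V" "\<phi> \<in> spanning_converging_forests V E"
    and "(u, v) \<in> \<phi>"
  shows "forest_root V (\<phi> - {(u, v)}) u = u" "forest_root V (\<phi> - {(u, v)}) v \<noteq> u"
proof -
  define \<psi> where "\<psi> = \<phi> - {(u, v)}"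
  have \<phi>: "\<phi> \<subseteq> E" "single_valued \<phi>" "acyclic \<phi>"
    using assms(3) spanning_converging_forests_iff[OF assms(1,2)] by auto
  then have \<psi>: "finite \<psi>" "\<psi> \<subseteq> V \<times> V" "single_valued \<psi>" "acyclic \<psi>"
    using assms(1,2) finite_subset[of \<psi> "V \<times> V"] single_valued_subset[of \<psi> \<phi>]
      acyclic_subset[of \<phi> \<psi>]
    by (auto simp: \<psi>_def)
  have uv: "u \<in> V" "v \<in> V" using assms(2,4) \<phi>(1) by auto
  have "out_nbrs \<psi> u = {}"
    using assms(4) \<phi>(2) by (auto simp: \<psi>_def out_nbrs_def single_valued_def)
  then show "forest_root V \<psi> u = u" using forest_root_eqI[OF \<psi> uv(1)] by blast
  obtain r where r: "(v, r) \<in> \<psi>\<^sup>*" "out_nbrs \<psi> r = {}"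
    using reachable_sink_exists[OF \<psi>(1,4)] by blast
  have "r \<noteq> u"
  proof
    assume "r = u"
    with r(1) have "(v, u) \<in> \<phi>\<^sup>*" using rtrancl_mono[of \<psi> \<phi>] by (auto simp: \<psi>_def)
    with assms(4) have "(u, u) \<in> \<phi>\<^sup>+" by (rule rtrancl_into_trancl2)
    with \<phi>(3) show False by (simp add: acyclic_def)
  qed
  with forest_root_eqI[OF \<psi> uv(2) r] show "forest_root V \<psi> v \<noteq> u" by simp
qed

lemma mem_insert_update_iff:
  assumes "\<forall>\<psi>\<in>set L. e \<notin> \<psi>"
    and "e \<in> \<phi> \<Longrightarrow>
      forest_root V (\<phi> - {e}) (fst e) = fst e \<and> forest_root V (\<phi> - {e}) (snd e) \<noteq> fst e"
  shows "\<phi> \<in> set (insert_update V e L) \<longleftrightarrow> \<phi> - {e} \<in> set L"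
proof (cases "e \<in> \<phi>")
  case True
  then have "\<phi> = insert e \<psi> \<longleftrightarrow> \<psi> = \<phi> - {e}" if "\<psi> \<in> set L" for \<psi>
    using assms(1) that by blast
  with True assms show ?thesis by (force simp: insert_update_def image_iff)
next
  case False
  then show ?thesis by (auto simp: insert_update_def)
qed

lemma prob_mem_insert_update:
  assumes "finite V" "insert (u, v) E \<subseteq> V \<times> V" "(u, v) \<notin> E"
    and "\<forall>L\<in>set_pmf D. set L \<subseteq> spanning_converging_forests V E"
    and "\<phi> \<in> spanning_converging_forests V (insert (u, v) E)"
  shows "measure_pmf.prob D {L. \<phi> \<in> set (insert_update V (u, v) L)}
       = measure_pmf.prob D {L. \<phi> - {(u, v)} \<in> set L}"
proof -
  have "\<phi> \<in> set (insert_update V (u, v) L) \<longleftrightarrow> \<phi> - {(u, v)} \<in> set L" if "L \<in> set_pmf D" for L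
  proof (rule mem_insert_update_iff)
    show "\<forall>\<psi>\<in>set L. (u, v) \<notin> \<psi>"
      using assms(3,4) that by (auto simp: spanning_converging_forests_def)
    show "forest_root V (\<phi> - {(u, v)}) (fst (u, v)) = fst (u, v) \<and>
        forest_root V (\<phi> - {(u, v)}) (snd (u, v)) \<noteq> fst (u, v)" if "(u, v) \<in> \<phi>"
      using forest_roots_Diff_edge[OF assms(1,2,5) that] by simp
  qed
  then show ?thesis by (intro measure_prob_cong_0) (auto simp: pmf_eq_0_set_pmf)
qed

theorem theorem5p2:
  fixes V :: "'a set" and E :: "('a \<times> 'a) set" and u v :: 'a
    and l :: nat and D :: "('a \<times> 'a) set list pmf"
  assumes "simple_digraph V E"
    and "u \<in> V" and "v \<in> V" and "u \<noteq> v" and "(u, v) \<notin> E"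
    and "\<forall>L\<in>set_pmf D. length L = l \<and> set L \<subseteq> spanning_converging_forests V E"
    and "\<forall>\<phi>1\<in>spanning_converging_forests V E. \<forall>\<phi>2\<in>spanning_converging_forests V E.
           measure_pmf.prob D {L. \<phi>1 \<in> set L} = measure_pmf.prob D {L. \<phi>2 \<in> set L}"
  shows "\<forall>\<phi>1\<in>spanning_converging_forests V (insert (u, v) E).
         \<forall>\<phi>2\<in>spanning_converging_forests V (insert (u, v) E).
           measure_pmf.prob D {L. \<phi>1 \<in> set (insert_update V (u, v) L)}
         = measure_pmf.prob D {L. \<phi>2 \<in> set (insert_update V (u, v) L)}"
proof (intro ballI)
  fix \<phi>\<^sub>1 \<phi>\<^sub>2
  assume \<phi>\<^sub>1: "\<phi>\<^sub>1 \<in> spanning_converging_forests V (insert (u, v) E)"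
    and \<phi>\<^sub>2: "\<phi>\<^sub>2 \<in> spanning_converging_forests V (insert (u, v) E)"
  have V: "finite V" "insert (u, v) E \<subseteq> V \<times> V"
    using assms(1-3) by (auto simp: simple_digraph_def)
  have D: "\<forall>L\<in>set_pmf D. set L \<subseteq> spanning_converging_forests V E"
    using assms(6) by blast
  have "measure_pmf.prob D {L. \<phi>\<^sub>1 - {(u, v)} \<in> set L}
      = measure_pmf.prob D {L. \<phi>\<^sub>2 - {(u, v)} \<in> set L}"
    using assms(7) spanning_converging_forest_Diff_edge[OF V] \<phi>\<^sub>1 \<phi>\<^sub>2 by blast
  then show "measure_pmf.prob D {L. \<phi>\<^sub>1 \<in> set (insert_update V (u, v) L)}
           = measure_pmf.prob D {L. \<phi>\<^sub>2 \<in> set (insert_update V (u, v) L)}"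
    using prob_mem_insert_update[OF V assms(5) D] \<phi>\<^sub>1 \<phi>\<^sub>2 by simp
qed

end
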